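(* Let $\alpha>d$ and $\kappa\ge0$ be integers with $\alpha>d-\kappa$, and let $\delta_\varepsilon=\varepsilon^{\frac{2\kappa+2\alpha}{2\kappa+2\alpha+d}}$. There is $a>0$ such that for all $M>1$, all $\varepsilon>0$ and all $F\in\mathrm{span}\{\Psi_{\mathcal O}\}$ with $\|F\|_{H^{\alpha-d/2}(\mathbb R^d)}\le M\delta_\varepsilon/\varepsilon$, there is a decomposition $F=F_1+F_2$ with $F_1,F_2\in\mathrm{span}\{\Psi_{\mathcal O}\}$, $\|F_1\|_{(H^\kappa(\mathbb R^d))^*}\le\delta_\varepsilon^3/\varepsilon^2$ and $\|F_2\|_{B^\alpha_{11}(\mathbb R^d)}\le aM^2\delta_\varepsilon^2/\varepsilon^2$.
   Context: $\mathcal O\subset\mathbb R^d$ nonempty bounded open with smooth boundary. $\Psi$ is an orthonormal basis of $L^2(\mathbb R^d)$ of compactly supported Daubechies wavelets of regularity $S>\alpha$; $\Psi_{\mathcal O}=\{\psi_{kl}:k\ge1,1\le l\le L_k\}$ are those whose supports meet $\mathcal O$, $L_k\simeq2^{dk}$; $\mathrm{span}\{\Psi_{\mathcal O}\}$ consists of $F=\sum_{k,l}F_{kl}\psi_{kl}$, $F_{kl}=\langle F,\psi_{kl}\rangle$. For such $F$ the norms are given by the wavelet characterisation $\|F\|_{B^s_{pq}(\mathbb R^d)}=\big(\sum_k2^{qk(s+d/2-d/p)}(\sum_l|F_{kl}|^p)^{q/p}\big)^{1/q}$; in particular $\|F\|^2_{H^{\alpha-d/2}(\mathbb R^d)}=\sum_k2^{(2\alpha-d)k}\sum_lF_{kl}^2$,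 $\|F\|^2_{(H^\kappa(\mathbb R^d))^*}=\|F\|^2_{H^{-\kappa}(\mathbb R^d)}=\sum_k2^{-2\kappa k}\sum_lF_{kl}^2$ and $\|F\|_{B^\alpha_{11}(\mathbb R^d)}=\sum_k2^{(\alpha-d/2)k}\sum_l|F_{kl}|$. *)

theory Defs
  imports "HOL-Analysis.Analysis"
begin

text \<open>Elements of span{Psi_O} are represented by their wavelet coefficient arrays
  F k l (= F_kl), indexed by levels k >= 1 and positions 1 <= l <= L k, vanishing
  outside this index range and square summable (membership in L2).\<close>

definition in_span :: "(nat \<Rightarrow> nat) \<Rightarrow> (nat \<Rightarrow> nat \<Rightarrow> real) \<Rightarrow> bool" where
  "in_span L F \<longleftrightarrow>
     (\<forall>k l. (k = 0 \<or> l = 0 \<or> L k < l) \<longrightarrow> F k l = 0) \<and>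
     (\<Sum>k. ennreal (\<Sum>l\<in>{1..L k}. (F k l)^2)) < \<infinity>"

definition H_norm_sq :: "(nat \<Rightarrow> nat) \<Rightarrow> real \<Rightarrow> (nat \<Rightarrow> nat \<Rightarrow> real) \<Rightarrow> ennreal" where
  "H_norm_sq L s F = (\<Sum>k. ennreal (2 powr (2 * s * real k) * (\<Sum>l\<in>{1..L k}. (F k l)^2)))"

definition B11_norm :: "(nat \<Rightarrow> nat) \<Rightarrow> nat \<Rightarrow> real \<Rightarrow> (nat \<Rightarrow> nat \<Rightarrow> real) \<Rightarrow> ennreal" where
  "B11_norm L d s F = (\<Sum>k. ennreal (2 powr ((s - real d / 2) * real k) * (\<Sum>l\<in>{1..L k}. \<bar>F k l\<bar>)))"

end

theory Submission
  imports Defs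
begin

(* Split F by wavelet level at the cutoff 2^((\<kappa> + \<alpha> - d/2) k) \<approx> T := M \<epsilon> / \<delta>^2.
   On the high levels the weight 2^(-2\<kappa>k) of the dual norm is at most T^-2 times the Sobolev
   weight 2^((2\<alpha> - d) k), so ||F1||_{H^-\<kappa>} \<le> ||F||_{H^(\<alpha>-d/2)} / T \<le> \<delta>^3 / \<epsilon>^2.
   On a low level, Cauchy-Schwarz over the L k \<le> c 2^(dk) coefficients bounds its B^\<alpha>_11
   contribution by sqrt c ||F||_{H^(\<alpha>-d/2)} 2^(dk/2); this geometric series is dominated by its
   last term, giving a bound of order (M \<delta> / \<epsilon>) T^(d / (2\<kappa> + 2\<alpha> - d)). The exponent of \<delta> is
   chosen exactly so that this equals M^(1+\<theta>) \<delta>^2 / \<epsilon>^2 with \<theta> \<le> 1. *)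

definition levels_restrict :: "nat set \<Rightarrow> (nat \<Rightarrow> nat \<Rightarrow> real) \<Rightarrow> nat \<Rightarrow> nat \<Rightarrow> real" where
  "levels_restrict S F k l = (if k \<in> S then F k l else 0)"

lemma levels_restrict_Compl_add:
  "F k l = levels_restrict (- S) F k l + levels_restrict S F k l"
  by (simp add: levels_restrict_def)

lemma ennreal_suminf_mono:
  "(\<And>k. f k \<le> g k) \<Longrightarrow> (\<Sum>k. f k :: ennreal) \<le> (\<Sum>k. g k)"
  by (rule suminf_le) (auto intro: summableI)

lemma ennreal_le_suminf:
  "ennreal (f k) \<le> (\<Sum>i. ennreal (f i))"
proof -
  have "(\<Sum>i\<in>{k}. ennreal (f i)) \<le> (\<Sum>i. ennreal (f i))"
    by (rule sum_le_suminf[OF summableI]) auto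
  then show ?thesis by simp
qed

lemma in_span_levels_restrict:
  assumes "in_span L F"
  shows "in_span L (levels_restrict S F)"
  unfolding in_span_def
proof (intro conjI allI impI)
  fix k l assume "k = 0 \<or> l = 0 \<or> L k < l"
  then have "F k l = 0" using assms unfolding in_span_def by blast
  then show "levels_restrict S F k l = 0" by (simp add: levels_restrict_def)
next
  have "(\<Sum>k. ennreal (\<Sum>l\<in>{1..L k}. (levels_restrict S F k l)^2))
        \<le> (\<Sum>k. ennreal (\<Sum>l\<in>{1..L k}. (F k l)^2))"
    by (intro ennreal_suminf_mono ennreal_leI sum_mono) (simp add: levels_restrict_def)
  then show "(\<Sum>k. ennreal (\<Sum>l\<in>{1..L k}. (levels_restrict S F k l)^2)) < \<infinity>"
    using assms unfolding in_span_def by (blast intro: le_less_trans)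
qed

lemma H_norm_sq_levels_restrict_le:
  assumes c: "c \<ge> 0"
    and weight: "\<And>k. k \<in> S \<Longrightarrow> 2 powr (2 * t * real k) \<le> c * 2 powr (2 * s * real k)"
  shows "H_norm_sq L t (levels_restrict S F) \<le> ennreal c * H_norm_sq L s F"
proof -
  have "H_norm_sq L t (levels_restrict S F)
        \<le> (\<Sum>k. ennreal (c * (2 powr (2 * s * real k) * (\<Sum>l\<in>{1..L k}. (F k l)^2))))"
    unfolding H_norm_sq_def
  proof (intro ennreal_suminf_mono ennreal_leI)
    fix k
    have "2 powr (2 * t * real k) * (\<Sum>l\<in>{1..L k}. (F k l)^2)
          \<le> c * 2 powr (2 * s * real k) * (\<Sum>l\<in>{1..L k}. (F k l)^2)"
      if "k \<in> S" using weight[OF that] by (intro mult_right_mono) (auto intro: sum_nonneg)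
    then show "2 powr (2 * t * real k) * (\<Sum>l\<in>{1..L k}. (levels_restrict S F k l)^2)
               \<le> c * (2 powr (2 * s * real k) * (\<Sum>l\<in>{1..L k}. (F k l)^2))"
      using c by (cases "k \<in> S") (simp_all add: levels_restrict_def mult.assoc sum_nonneg)
  qed
  also have "\<dots> = ennreal c * H_norm_sq L s F"
    using c by (simp add: H_norm_sq_def ennreal_mult sum_nonneg)
  finally show ?thesis .
qed

lemma B11_norm_levels_restrict_finite:
  assumes "finite S"
  shows "B11_norm L d s (levels_restrict S F)
         = ennreal (\<Sum>k\<in>S. 2 powr ((s - real d / 2) * real k) * (\<Sum>l\<in>{1..L k}. \<bar>F k l\<bar>))"
proof -
  have "B11_norm L d s (levels_restrict S F)
        = (\<Sum>k\<in>S. ennreal (2 powr ((s - real d / 2) * real k) * (\<Sum>l\<in>{1..L k}. \<bar>F k l\<bar>)))"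
    unfolding B11_norm_def
    by (subst suminf_finite[OF assms]) (auto simp: levels_restrict_def intro!: sum.cong)
  then show ?thesis by (simp add: sum_nonneg)
qed

lemma square_sum_abs_le_card_sum_sq:
  fixes x :: "'a \<Rightarrow> real"
  shows "(\<Sum>i\<in>I. \<bar>x i\<bar>)^2 \<le> real (card I) * (\<Sum>i\<in>I. (x i)^2)"
  using Cauchy_Schwarz_ineq_sum[of "\<lambda>_. 1" "\<lambda>i. \<bar>x i\<bar>" I] by simp

lemma level_l1_le_of_sq:
  assumes c: "c \<ge> 0" and R: "R \<ge> 0"
    and card: "real (L k) \<le> c * 2 ^ (d * k)"
    and sq: "2 powr (2 * s * real k) * (\<Sum>l\<in>{1..L k}. (F k l)^2) \<le> R^2"
  shows "2 powr (s * real k) * (\<Sum>l\<in>{1..L k}. \<bar>F k l\<bar>) \<le> sqrt c * R * (2 powr (real d / 2))^k"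
proof (rule power2_le_imp_le)
  let ?Q = "\<Sum>l\<in>{1..L k}. (F k l)^2"
  have Q: "?Q \<ge> 0" by (simp add: sum_nonneg)
  have "(\<Sum>l\<in>{1..L k}. \<bar>F k l\<bar>)^2 \<le> real (L k) * ?Q"
    using square_sum_abs_le_card_sum_sq[of "F k" "{1..L k}"] by simp
  moreover have "(2 powr (s * real k))^2 = 2 powr (2 * s * real k)"
    by (simp add: power2_eq_square powr_add[symmetric] mult.assoc)
  ultimately have "(2 powr (s * real k) * (\<Sum>l\<in>{1..L k}. \<bar>F k l\<bar>))^2
        \<le> 2 powr (2 * s * real k) * (real (L k) * ?Q)"
    by (simp add: power_mult_distrib)
  also have "\<dots> = real (L k) * (2 powr (2 * s * real k) * ?Q)" by simp
  also have "\<dots> \<le> (c * 2 ^ (d * k)) * R^2"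
    using card sq Q by (intro mult_mono) auto
  also have "\<dots> = (sqrt c * R * (2 powr (real d / 2))^k)^2"
  proof -
    have "(2 powr (real d / 2))^2 = 2 ^ d"
      by (simp add: power2_eq_square powr_add[symmetric] powr_realpow)
    then have "((2 powr (real d / 2))^k)^2 = 2 ^ (d * k)"
      by (metis power_mult mult.commute)
    then show ?thesis using c by (simp add: power_mult_distrib)
  qed
  finally show "(2 powr (s * real k) * (\<Sum>l\<in>{1..L k}. \<bar>F k l\<bar>))^2 \<le> (sqrt c * R * (2 powr (real d / 2))^k)^2" .
  show "0 \<le> sqrt c * R * (2 powr (real d / 2))^k" using c R by simp
qed

lemma H_norm_sq_high_levels_le:
  assumes T: "T > 0"
  shows "H_norm_sq L (- \<kappa>) (levels_restrict {k. T \<le> 2 powr ((\<kappa> + \<sigma>) * real k)} F)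
         \<le> ennreal (1 / T^2) * H_norm_sq L \<sigma> F"
proof (rule H_norm_sq_levels_restrict_le)
  fix k assume "k \<in> {k. T \<le> 2 powr ((\<kappa> + \<sigma>) * real k)}"
  then have "T^2 \<le> (2 powr ((\<kappa> + \<sigma>) * real k))^2" using T by (simp add: power_mono)
  also have "\<dots> = 2 powr (2 * \<kappa> * real k) * 2 powr (2 * \<sigma> * real k)"
    by (simp add: power2_eq_square powr_add[symmetric] algebra_simps)
  finally have "T^2 * 2 powr (2 * - \<kappa> * real k) \<le> 2 powr (2 * \<sigma> * real k)"
    by (simp add: powr_minus field_simps)
  then show "2 powr (2 * - \<kappa> * real k) \<le> 1 / T^2 * 2 powr (2 * \<sigma> * real k)"
    using T by (simp add: field_simps)
qed simp

lemma B11_norm_low_levels_le: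
  assumes F: "in_span L F" and S: "finite S"
    and c: "c \<ge> 0" and R: "R \<ge> 0"
    and L: "\<forall>k\<ge>1. real (L k) \<le> c * 2 ^ (d * k)"
    and H: "H_norm_sq L (s - real d / 2) F \<le> ennreal (R^2)"
  shows "B11_norm L d s (levels_restrict S F) \<le> ennreal (sqrt c * R * (\<Sum>k\<in>S. (2 powr (real d / 2))^k))"
proof -
  have "(\<Sum>k\<in>S. 2 powr ((s - real d / 2) * real k) * (\<Sum>l\<in>{1..L k}. \<bar>F k l\<bar>))
        \<le> (\<Sum>k\<in>S. sqrt c * R * (2 powr (real d / 2))^k)"
  proof (rule sum_mono)
    fix k
    show "2 powr ((s - real d / 2) * real k) * (\<Sum>l\<in>{1..L k}. \<bar>F k l\<bar>)
          \<le> sqrt c * R * (2 powr (real d / 2))^k"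
    proof (cases "k = 0")
      case True
      then show ?thesis using F c R by (simp add: in_span_def)
    next
      case False
      have "ennreal (2 powr (2 * (s - real d / 2) * real k) * (\<Sum>l\<in>{1..L k}. (F k l)^2))
            \<le> ennreal (R^2)"
        using ennreal_le_suminf H unfolding H_norm_sq_def by (rule order_trans)
      then have "2 powr (2 * (s - real d / 2) * real k) * (\<Sum>l\<in>{1..L k}. (F k l)^2) \<le> R^2"
        by simp
      with False show ?thesis using L c R by (intro level_l1_le_of_sq) auto
    qed
  qed
  also have "\<dots> = sqrt c * R * (\<Sum>k\<in>S. (2 powr (real d / 2))^k)"
    by (simp add: sum_distrib_left)
  finally show ?thesis
    unfolding B11_norm_levels_restrict_finite[OF S] by (rule ennreal_leI)
qed

lemma sum_power_le_Max:
  fixes r :: real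
  assumes r: "r > 1" and S: "finite S" "S \<noteq> {}"
  shows "(\<Sum>k\<in>S. r^k) \<le> r / (r - 1) * r ^ Max S"
proof -
  have "(\<Sum>k\<in>S. r^k) \<le> (\<Sum>k<Suc (Max S). r^k)"
    using S r by (intro sum_mono2) (auto simp: less_Suc_eq_le)
  also have "\<dots> = (r ^ Suc (Max S) - 1) / (r - 1)"
    using r by (subst geometric_sum) auto
  also have "\<dots> \<le> r ^ Suc (Max S) / (r - 1)"
    using r by (intro divide_right_mono) auto
  also have "\<dots> = r / (r - 1) * r ^ Max S"
    by simp
  finally show ?thesis .
qed

lemma finite_levels_below:
  assumes "A > 0"
  shows "finite {k. 2 powr (A * real k) < T}"
proof (rule finite_subset)
  show "{k. 2 powr (A * real k) < T} \<subseteq> {..nat \<lceil>log 2 T / A\<rceil>}"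
  proof
    fix k assume "k \<in> {k. 2 powr (A * real k) < T}"
    then have lt: "2 powr (A * real k) < T" by simp
    moreover have "T > 0" using lt powr_gt_zero[of 2 "A * real k"] by linarith
    ultimately have "A * real k < log 2 T" by (simp add: less_log_iff)
    then have "real k \<le> log 2 T / A" using assms by (simp add: field_simps)
    then have "real k \<le> real (nat \<lceil>log 2 T / A\<rceil>)"
      using real_nat_ceiling_ge[of "log 2 T / A"] by linarith
    then show "k \<in> {..nat \<lceil>log 2 T / A\<rceil>}" by simp
  qed
qed simp

lemma sum_power_levels_below_le:
  assumes A: "A > 0" and b: "b > 0" and T: "T > 0"
  shows "(\<Sum>k\<in>{k. 2 powr (A * real k) < T}. (2 powr b)^k) \<le> 2 powr b / (2 powr b - 1) * T powr (b / A)"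
proof -
  let ?S = "{k. 2 powr (A * real k) < T}"
  have r: "2 powr b > 1" using b by simp
  show ?thesis
  proof (cases "?S = {}")
    case True
    then show ?thesis using r T by simp
  next
    case False
    have "Max ?S \<in> ?S" using False finite_levels_below[OF A] by (rule Max_in[rotated])
    then have "(2 powr b) ^ Max ?S = (2 powr (A * real (Max ?S))) powr (b / A)"
      using A by (simp add: powr_realpow[symmetric] powr_powr mult.commute)
    also have "\<dots> \<le> T powr (b / A)"
      using \<open>Max ?S \<in> ?S\<close> A b by (intro powr_mono2) auto
    finally have "2 powr b / (2 powr b - 1) * (2 powr b) ^ Max ?S
                  \<le> 2 powr b / (2 powr b - 1) * T powr (b / A)"
      using r by (intro mult_left_mono) auto
    with sum_power_le_Max[OF r finite_levels_below[OF A] False] show ?thesis by simp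
  qed
qed

lemma split_high_low_levels:
  fixes s \<kappa> R T c :: real
  assumes F: "in_span L F" and d: "d \<ge> 1" and \<kappa>s: "real d < 2 * \<kappa> + 2 * s"
    and c: "c \<ge> 0" and R: "R \<ge> 0" and T: "T > 0"
    and L: "\<forall>k\<ge>1. real (L k) \<le> c * 2 ^ (d * k)"
    and H: "H_norm_sq L (s - real d / 2) F \<le> ennreal (R^2)"
  shows "\<exists>F1 F2. in_span L F1 \<and> in_span L F2 \<and> (\<forall>k l. F k l = F1 k l + F2 k l) \<and>
    H_norm_sq L (- \<kappa>) F1 \<le> ennreal ((R / T)^2) \<and>
    B11_norm L d s F2 \<le> ennreal (sqrt c * 2 powr (real d / 2) / (2 powr (real d / 2) - 1)
                                   * R * T powr (real d / (2 * \<kappa> + 2 * s - real d)))"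
proof -
  define A where "A = \<kappa> + (s - real d / 2)"
  define S where "S = {k. 2 powr (A * real k) < T}"
  have A_pos: "A > 0" using \<kappa>s by (simp add: A_def)
  have "- S = {k. T \<le> 2 powr ((\<kappa> + (s - real d / 2)) * real k)}"
    by (auto simp: S_def A_def)
  then have "H_norm_sq L (- \<kappa>) (levels_restrict (- S) F)
             \<le> ennreal (1 / T^2) * H_norm_sq L (s - real d / 2) F"
    using H_norm_sq_high_levels_le[OF T] by simp
  also have "\<dots> \<le> ennreal (1 / T^2) * ennreal (R^2)"
    using H by (rule mult_left_mono) simp
  finally have high: "H_norm_sq L (- \<kappa>) (levels_restrict (- S) F) \<le> ennreal ((R / T)^2)"
    by (simp add: ennreal_mult[symmetric] power_divide)
  have "B11_norm L d s (levels_restrict S F)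
        \<le> ennreal (sqrt c * R * (\<Sum>k\<in>S. (2 powr (real d / 2))^k))"
    using B11_norm_low_levels_le[OF F _ c R L H] finite_levels_below[OF A_pos]
    by (simp add: S_def)
  also have "\<dots> \<le> ennreal (sqrt c * R * (2 powr (real d / 2) / (2 powr (real d / 2) - 1)
                                 * T powr (real d / 2 / A)))"
    using sum_power_levels_below_le[OF A_pos _ T, of "real d / 2"] d c R
    unfolding S_def by (intro ennreal_leI mult_left_mono) auto
  finally have low: "B11_norm L d s (levels_restrict S F)
      \<le> ennreal (sqrt c * 2 powr (real d / 2) / (2 powr (real d / 2) - 1)
                * R * T powr (real d / (2 * \<kappa> + 2 * s - real d)))"
    by (simp add: A_def field_simps)
  show ?thesis
    using in_span_levels_restrict[OF F] levels_restrict_Compl_add high low by blast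
qed

lemma noise_level_balance:
  fixes M \<epsilon> d x :: real
  assumes M: "M > 1" and \<epsilon>: "\<epsilon> > 0" and d: "d > 0" and x: "2 * d \<le> x"
    and \<delta>: "\<delta> = \<epsilon> powr (x / (x + d))"
  shows "M * \<delta> / \<epsilon> * (M * \<epsilon> / \<delta>^2) powr (d / (x - d)) \<le> M^2 * \<delta>^2 / \<epsilon>^2"
proof -
  define p where "p = x / (x + d)"
  define \<theta> where "\<theta> = d / (x - d)"
  have \<theta>: "0 \<le> \<theta>" "\<theta> \<le> 1" using d x by (auto simp: \<theta>_def field_simps)
  have "x - d > 0" "x + d > 0" using d x by auto
  then have exponent: "(1 - 2 * p) * \<theta> = p - 1"
    by (simp add: p_def \<theta>_def divide_simps) (simp add: algebra_simps)
  have \<delta>_\<epsilon>: "\<delta> / \<epsilon> = \<epsilon> powr (p - 1)"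
    using \<epsilon> by (simp add: \<delta> p_def powr_diff)
  have "M * \<epsilon> / \<delta>^2 = M * \<epsilon> powr (1 - 2 * p)"
    using \<epsilon> by (simp add: \<delta> p_def powr_diff power2_eq_square powr_add[symmetric])
  then have "(M * \<epsilon> / \<delta>^2) powr \<theta> = M powr \<theta> * (\<delta> / \<epsilon>)"
    using M \<epsilon> by (simp add: powr_mult powr_powr exponent \<delta>_\<epsilon>)
  then have "M * \<delta> / \<epsilon> * (M * \<epsilon> / \<delta>^2) powr \<theta> = M * M powr \<theta> * (\<delta> / \<epsilon>)^2"
    by (simp add: power2_eq_square)
  also have "\<dots> \<le> M * M * (\<delta> / \<epsilon>)^2"
    using M \<theta> powr_mono[of \<theta> 1 M] by (intro mult_right_mono mult_left_mono) auto
  finally show ?thesis by (simp add: \<theta>_def power2_eq_square power_divide)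
qed

lemma split_at_noise_level:
  fixes \<kappa> s M \<epsilon> c :: real
  assumes F: "in_span L F" and d: "d \<ge> 1" and s: "real d < s" and \<kappa>: "\<kappa> \<ge> 0"
    and c: "c \<ge> 0" and L: "\<forall>k\<ge>1. real (L k) \<le> c * 2 ^ (d * k)"
    and M: "M > 1" and \<epsilon>: "\<epsilon> > 0"
    and \<delta>: "\<delta> = \<epsilon> powr ((2 * \<kappa> + 2 * s) / (2 * \<kappa> + 2 * s + real d))"
    and H: "H_norm_sq L (s - real d / 2) F \<le> ennreal ((M * \<delta> / \<epsilon>)^2)"
  defines "a \<equiv> sqrt c * 2 powr (real d / 2) / (2 powr (real d / 2) - 1)"
  shows "\<exists>F1 F2. in_span L F1 \<and> in_span L F2 \<and> (\<forall>k l. F k l = F1 k l + F2 k l) \<and>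
    H_norm_sq L (- \<kappa>) F1 \<le> ennreal ((\<delta>^3 / \<epsilon>^2)^2) \<and>
    B11_norm L d s F2 \<le> ennreal (a * M^2 * \<delta>^2 / \<epsilon>^2)"
proof -
  define R where "R = M * \<delta> / \<epsilon>"
  define T where "T = M * \<epsilon> / \<delta>^2"
  define \<theta> where "\<theta> = real d / (2 * \<kappa> + 2 * s - real d)"
  have "\<delta> > 0" using \<epsilon> by (simp add: \<delta>)
  have \<kappa>s: "real d < 2 * \<kappa> + 2 * s" using s \<kappa> by simp
  have R: "R \<ge> 0" and T: "T > 0" using M \<epsilon> \<open>\<delta> > 0\<close> by (auto simp: R_def T_def)
  obtain F1 F2 where split: "in_span L F1" "in_span L F2" "\<forall>k l. F k l = F1 k l + F2 k l"
    and high: "H_norm_sq L (- \<kappa>) F1 \<le> ennreal ((R / T)^2)"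
    and low: "B11_norm L d s F2 \<le> ennreal (a * R * T powr \<theta>)"
    using split_high_low_levels[OF F d \<kappa>s c R T L H[folded R_def]] unfolding a_def \<theta>_def by blast
  have "R / T = \<delta>^3 / \<epsilon>^2"
    using M \<epsilon> \<open>\<delta> > 0\<close> by (simp add: R_def T_def field_simps power2_eq_square power3_eq_cube)
  moreover have "a * R * T powr \<theta> \<le> a * M^2 * \<delta>^2 / \<epsilon>^2"
  proof -
    have "2 powr (real d / 2) > 1" using d by simp
    then have "a \<ge> 0" using c by (simp add: a_def)
    moreover have "R * T powr \<theta> \<le> M^2 * \<delta>^2 / \<epsilon>^2"
      using noise_level_balance[OF M \<epsilon> _ _ \<delta>] d s \<kappa> by (simp add: R_def T_def \<theta>_def)
    ultimately have "a * (R * T powr \<theta>) \<le> a * (M^2 * \<delta>^2 / \<epsilon>^2)"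
      by (rule mult_left_mono[rotated])
    then show ?thesis by (simp add: mult.assoc)
  qed
  ultimately show ?thesis
    using split high low ennreal_leI order_trans by fastforce
qed

theorem lemmaB3:
  fixes d \<alpha> \<kappa> :: nat and L :: "nat \<Rightarrow> nat"
  assumes d_pos: "d \<ge> 1"
    and alpha_gt: "\<alpha> > d"
    and alpha_kappa: "int \<alpha> > int d - int \<kappa>"
    and L_size: "\<exists>c1 c2. c1 > 0 \<and> c2 > 0 \<and>
        (\<forall>k\<ge>1. c1 * 2 ^ (d * k) \<le> real (L k) \<and> real (L k) \<le> c2 * 2 ^ (d * k))"
  shows "\<exists>a>0. \<forall>M \<epsilon> F. M > 1 \<longrightarrow> \<epsilon> > 0 \<longrightarrow> in_span L F \<longrightarrow>
     (let \<delta> = \<epsilon> powr ((2 * real \<kappa> + 2 * real \<alpha>) / (2 * real \<kappa> + 2 * real \<alpha> + real d)) in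
      H_norm_sq L (real \<alpha> - real d / 2) F \<le> ennreal ((M * \<delta> / \<epsilon>)^2) \<longrightarrow>
      (\<exists>F1 F2. in_span L F1 \<and> in_span L F2 \<and> (\<forall>k l. F k l = F1 k l + F2 k l) \<and>
         H_norm_sq L (- real \<kappa>) F1 \<le> ennreal ((\<delta>^3 / \<epsilon>^2)^2) \<and>
         B11_norm L d (real \<alpha>) F2 \<le> ennreal (a * M^2 * \<delta>^2 / \<epsilon>^2)))"
proof -
  \<comment> \<open>\<open>alpha_kappa\<close> is implied by \<open>alpha_gt\<close> and not needed.\<close>
  obtain c :: real where c: "c > 0" and L: "\<forall>k\<ge>1. real (L k) \<le> c * 2 ^ (d * k)"
    using L_size by blast
  define a where "a = sqrt c * 2 powr (real d / 2) / (2 powr (real d / 2) - 1)"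
  have "2 powr (real d / 2) > 1" using d_pos by simp
  then have "a > 0" using c by (simp add: a_def)
  show ?thesis
    unfolding Let_def
    by (intro exI[of _ a] conjI allI impI \<open>a > 0\<close>; unfold a_def;
        rule split_at_noise_level[OF _ d_pos _ _ _ L]) (use alpha_gt c in auto)
qed

end
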